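(* Let $r:\mathbb{R}\to\mathbb{R}$ and let $\pi^m(a)=\sum_{k=1}^Nw_k\pi^{c_k}(a)$ with $\pi^{c_k}(a)=\mathcal N(a;\mu_k,\sigma_k^2)$, parameters $\theta=(\mu_1,\sigma_1,\dots,\mu_N,\sigma_N,w_1,\dots,w_N)$. Let $\hat\partial^{LR}_{\vartheta}J(\pi^m)=\partial_\vartheta\log\pi^m(A)\,r(A)$ with $A\sim\pi^m$, and for a single component let $\hat\partial^{LR}_{\vartheta_k}J(\pi^{c_k})=\partial_{\vartheta_k}\log\pi^{c_k}(A)\,r(A)$. Let $\rho_k(A)=\pi^{c_k}(A)/\pi^m(A)$. Then for each $k$ and each $\vartheta_k\in\{\mu_k,\sigma_k\}$, $$\mathbb{V}_{\pi^m(A)}\big(\hat\partial^{LR}_{\vartheta_k}J(\pi^m)\big)=w_k^2\,\mathbb{V}_{\pi^m(A)}\big(\rho_k(A)\,\hat\partial^{LR}_{\vartheta_k}J(\pi^{c_k})\big),\qquad \mathbb{V}_{\pi^m(A)}\big(\hat\partial^{LR}_{w_k}J(\pi^m)\big)=\mathbb{V}_{\pi^m(A)}\big(\rho_k(A)r(A)\big).$$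
   Context: Bandit setting with objective $J(\pi)=\mathbb{E}_{a\sim\pi}[r(a)]$. $\mathcal N(a;\mu,\sigma^2)$ is the Gaussian density with mean $\mu$ and standard deviation $\sigma$. The weights $w_k$ are treated as free coordinates when differentiating. $\mathbb{V}_q$ denotes variance under $A\sim q$. *)

theory Defs
  imports "HOL-Probability.Probability"
begin

definition mix_density :: "nat \<Rightarrow> (nat \<Rightarrow> real) \<Rightarrow> (nat \<Rightarrow> real) \<Rightarrow> (nat \<Rightarrow> real) \<Rightarrow> real \<Rightarrow> real" where
  "mix_density N mu sd w a = (\<Sum>k<N. w k * normal_density (mu k) (sd k) a)"

definition expect_dens :: "(real \<Rightarrow> real) \<Rightarrow> (real \<Rightarrow> real) \<Rightarrow> real" where
  "expect_dens q X = integral\<^sup>L (density lborel (\<lambda>a. ennreal (q a))) X"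

definition var_dens :: "(real \<Rightarrow> real) \<Rightarrow> (real \<Rightarrow> real) \<Rightarrow> real" where
  "var_dens q X = expect_dens q (\<lambda>a. (X a - expect_dens q X)\<^sup>2)"

end

theory Submission imports Defs begin

text \<open>The mixture depends on the parameters of component k only through the summand
  w_k \<pi>_k, i.e. affinely, so the chain rule for ln gives, pointwise in A,
  \<partial> ln \<pi>_m = w_k (\<pi>_k / \<pi>_m) \<partial> ln \<pi>_k for the mean and the standard deviation of
  component k, and \<partial> ln \<pi>_m / \<partial> w_k = \<pi>_k / \<pi>_m.  The variance identities then follow
  from Var (c X) = c^2 Var X.\<close>

lemma var_dens_scale: "var_dens q (\<lambda>a. c * X a) = c\<^sup>2 * var_dens q X"
proof -
  have "expect_dens q (\<lambda>a. c * X a) = c * expect_dens q X"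
    unfolding expect_dens_def by simp
  moreover have "(c * X a - c * expect_dens q X)\<^sup>2 = c\<^sup>2 * (X a - expect_dens q X)\<^sup>2" for a
    by (simp add: power2_eq_square algebra_simps)
  ultimately show ?thesis
    unfolding var_dens_def by (simp add: expect_dens_def)
qed

lemma deriv_ln_affine:
  fixes g :: "real \<Rightarrow> real"
  assumes "g differentiable (at x0)" "C + c * g x0 > 0"
  shows "deriv (\<lambda>x. ln (C + c * g x)) x0 = c * deriv g x0 / (C + c * g x0)"
proof -
  obtain D where D: "(g has_real_derivative D) (at x0)"
    using assms(1) real_differentiable_def by blast
  then have "deriv g x0 = D"
    by (rule DERIV_imp_deriv)
  moreover have "deriv (\<lambda>x. ln (C + c * g x)) x0 = c * D / (C + c * g x0)"
    using D assms(2) by (intro DERIV_imp_deriv) (auto intro!: derivative_eq_intros)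
  ultimately show ?thesis
    by simp
qed

lemma deriv_ln_affine_eq_scaled_log_deriv:
  fixes g :: "real \<Rightarrow> real"
  assumes "g differentiable (at x0)" "g x0 > 0" "C + c * g x0 > 0"
  shows "deriv (\<lambda>x. ln (C + c * g x)) x0 = c * (g x0 / (C + c * g x0)) * deriv (\<lambda>x. ln (g x)) x0"
  using deriv_ln_affine[OF assms(1,3)] deriv_ln_affine[OF assms(1), of 0 1] assms(2)
  by (simp add: field_simps)

lemma normal_density_differentiable_mean: "(\<lambda>m. normal_density m \<sigma> a) differentiable (at \<mu>)"
proof (cases "\<sigma> = 0")
  case True
  then show ?thesis
    by (simp add: normal_density_def)
next
  case False
  then show ?thesis
    unfolding real_differentiable_def normal_density_def
    by (intro exI) (auto intro!: derivative_eq_intros)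
qed

lemma normal_density_differentiable_sd:
  assumes "\<sigma> > 0"
  shows "(\<lambda>s. normal_density \<mu> s a) differentiable (at \<sigma>)"
proof -
  have "2 * pi * \<sigma>\<^sup>2 > 0"
    using assms by simp
  then show ?thesis
    unfolding real_differentiable_def normal_density_def
    by (intro exI) (auto intro!: derivative_eq_intros)
qed

lemma mix_density_fun_upd:
  assumes "k < N"
  shows "mix_density N (mu(k := m)) (sd(k := s)) (w(k := v)) a
    = mix_density N mu sd w a - w k * normal_density (mu k) (sd k) a + v * normal_density m s a"
proof -
  have "mix_density N mu' sd' w' a
      = (\<Sum>j\<in>{..<N}-{k}. w' j * normal_density (mu' j) (sd' j) a)
        + w' k * normal_density (mu' k) (sd' k) a" for mu' sd' w'
    unfolding mix_density_def using assms by (subst sum.remove[of _ k]) auto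
  then show ?thesis
    by simp
qed

lemma mix_density_pos:
  assumes "k < N" "\<And>j. j < N \<Longrightarrow> sd j > 0" "\<And>j. j < N \<Longrightarrow> w j > 0"
  shows "mix_density N mu sd w a > 0"
  unfolding mix_density_def using assms by (intro sum_pos) (auto simp: normal_density_pos)

lemma deriv_ln_mix_density_mean:
  assumes "k < N" "sd k > 0" "mix_density N mu sd w a > 0"
  shows "deriv (\<lambda>x. ln (mix_density N (mu(k := x)) sd w a)) (mu k)
    = w k * (normal_density (mu k) (sd k) a / mix_density N mu sd w a)
        * deriv (\<lambda>x. ln (normal_density x (sd k) a)) (mu k)"
proof -
  define C where "C = mix_density N mu sd w a - w k * normal_density (mu k) (sd k) a"
  have mix: "mix_density N (mu(k := x)) sd w a = C + w k * normal_density x (sd k) a" for x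
    unfolding C_def
    using mix_density_fun_upd[OF assms(1), where mu = mu and sd = sd and w = w
        and m = x and s = "sd k" and v = "w k"]
    by simp
  show ?thesis
    using deriv_ln_affine_eq_scaled_log_deriv[OF normal_density_differentiable_mean]
      mix[of "mu k"] assms(2,3) by (simp add: mix normal_density_pos)
qed

lemma deriv_ln_mix_density_sd:
  assumes "k < N" "sd k > 0" "mix_density N mu sd w a > 0"
  shows "deriv (\<lambda>x. ln (mix_density N mu (sd(k := x)) w a)) (sd k)
    = w k * (normal_density (mu k) (sd k) a / mix_density N mu sd w a)
        * deriv (\<lambda>x. ln (normal_density (mu k) x a)) (sd k)"
proof -
  define C where "C = mix_density N mu sd w a - w k * normal_density (mu k) (sd k) a"
  have mix: "mix_density N mu (sd(k := x)) w a = C + w k * normal_density (mu k) x a" for x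
    unfolding C_def
    using mix_density_fun_upd[OF assms(1), where mu = mu and sd = sd and w = w
        and m = "mu k" and s = x and v = "w k"]
    by simp
  show ?thesis
    using deriv_ln_affine_eq_scaled_log_deriv[OF normal_density_differentiable_sd[OF assms(2)]]
      mix[of "sd k"] assms(2,3) by (simp add: mix normal_density_pos)
qed

lemma deriv_ln_mix_density_weight:
  assumes "k < N" "mix_density N mu sd w a > 0"
  shows "deriv (\<lambda>x. ln (mix_density N mu sd (w(k := x)) a)) (w k)
    = normal_density (mu k) (sd k) a / mix_density N mu sd w a"
proof -
  define C where "C = mix_density N mu sd w a - w k * normal_density (mu k) (sd k) a"
  have mix: "mix_density N mu sd (w(k := x)) a = C + normal_density (mu k) (sd k) a * x" for x
    unfolding C_def
    using mix_density_fun_upd[OF assms(1), where mu = mu and sd = sd and w = w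
        and m = "mu k" and s = "sd k" and v = x]
    by (simp add: mult.commute)
  show ?thesis
    using deriv_ln_affine[of "\<lambda>x. x"] mix[of "w k"] assms(2) by (simp add: mix)
qed

theorem lemmaC6:
  fixes N :: nat and mu sd w :: "nat \<Rightarrow> real" and r :: "real \<Rightarrow> real" and k :: nat
  assumes "k < N"
    and "\<And>j. j < N \<Longrightarrow> sd j > 0"
    and "\<And>j. j < N \<Longrightarrow> w j > 0"
    and "(\<Sum>j<N. w j) = 1"
  defines "pm \<equiv> mix_density N mu sd w"
    and "rho \<equiv> (\<lambda>a. normal_density (mu k) (sd k) a / mix_density N mu sd w a)"
  shows
    "var_dens pm (\<lambda>a. deriv (\<lambda>x. ln (mix_density N (mu(k := x)) sd w a)) (mu k) * r a)
       = (w k)\<^sup>2 * var_dens pm (\<lambda>a. rho a *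
           (deriv (\<lambda>x. ln (normal_density x (sd k) a)) (mu k) * r a))
   \<and> var_dens pm (\<lambda>a. deriv (\<lambda>x. ln (mix_density N mu (sd(k := x)) w a)) (sd k) * r a)
       = (w k)\<^sup>2 * var_dens pm (\<lambda>a. rho a *
           (deriv (\<lambda>x. ln (normal_density (mu k) x a)) (sd k) * r a))
   \<and> var_dens pm (\<lambda>a. deriv (\<lambda>x. ln (mix_density N mu sd (w(k := x)) a)) (w k) * r a)
       = var_dens pm (\<lambda>a. rho a * r a)"
proof -
  have pos: "mix_density N mu sd w a > 0" for a
    using mix_density_pos[OF assms(1-3)] .
  have "sd k > 0"
    using assms(1,2) by blast
  then have scores:
    "\<And>a. deriv (\<lambda>x. ln (mix_density N (mu(k := x)) sd w a)) (mu k) * r a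
       = w k * (rho a * (deriv (\<lambda>x. ln (normal_density x (sd k) a)) (mu k) * r a))"
    "\<And>a. deriv (\<lambda>x. ln (mix_density N mu (sd(k := x)) w a)) (sd k) * r a
       = w k * (rho a * (deriv (\<lambda>x. ln (normal_density (mu k) x a)) (sd k) * r a))"
    "\<And>a. deriv (\<lambda>x. ln (mix_density N mu sd (w(k := x)) a)) (w k) * r a = rho a * r a"
    unfolding rho_def
    by (simp_all add: deriv_ln_mix_density_mean deriv_ln_mix_density_sd
        deriv_ln_mix_density_weight assms(1) pos)
  show ?thesis
    unfolding scores var_dens_scale by simp
qed

end
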